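(* Let $Z_1,\dots,Z_n$ be i.i.d. real random variables with probability density function $f_Z$ such that $f_Z(0)=0$ and, for some $\delta>0$, $f_Z$ is continuously differentiable on $[0,\delta]$. Let $\sigma^2:\mathbb{R}\to[0,\infty)$ be bounded and right-continuous at $z=0$. Let $K:\mathbb{R}\to[0,\infty)$ be bounded and supported on $[-C_K,C_K]$ for some $C_K>0$, with $\int K(z)1\{z\ge0\}dz=\int K(z)1\{z<0\}dz=1$ and with the matrices $\int K(z)1\{z\ge0\}r_1(z)r_1(z)'dz$ and $\int K(z)1\{z<0\}r_1(z)r_1(z)'dz$ nonsingular, where $r_1(z)=(1,z)'$. For $h>0$ define $$\Gamma_+(h)=\frac{1}{nh}\sum_{i=1}^n1\{Z_i\ge0\}K(Z_i/h)r_1(Z_i/h)r_1(Z_i/h)',\qquad \Psi_+(h)=\frac{1}{nh^2}\sum_{i=1}^n1\{Z_i\ge0\}K(Z_i/h)^2r_1(Z_i/h)r_1(Z_i/h)'\sigma^2(Z_i).$$ If $n\to\infty$, $h\to0$ and $nh^2\to\infty$, then $$h^{-1}\Gamma_+(h)=C_{\Gamma,+}+o_p(1)\quad\text{and}\quad\Psi_+(h)=C_{\Psi,+}+o_p(1),$$ where $C_{\Gamma,+}=f_Z'(0)\int_0^\infty zK(z)r_1(z)r_1(z)'dz$ and $C_{\Psi,+}=f_Z'(0)\sigma^2(0)\int_0^\infty zK(z)^2r_1(z)r_1(z)'dz$.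
   Context: $f_Z'(0)$ denotes the (right) derivative of $f_Z$ at $0$. In the paper's application $Z_i$ is a signed distance running variable and $\sigma^2(z)=\mathrm{Var}(Y_i\mid Z_i=z)$. *)

theory Defs
  imports "HOL-Probability.Probability"
begin

definition r1 :: "real \<Rightarrow> real^2" where
  "r1 z = vector [1, z]"

definition outer :: "real^2 \<Rightarrow> real^2 \<Rightarrow> real^2^2" where
  "outer u v = (\<chi> i j. u $ i * v $ j)"

definition Gamma_plus ::
  "(nat \<Rightarrow> 'w \<Rightarrow> real) \<Rightarrow> (real \<Rightarrow> real) \<Rightarrow> nat \<Rightarrow> real \<Rightarrow> 'w \<Rightarrow> real^2^2" where
  "Gamma_plus Z K n h w = (1 / (real n * h)) *\<^sub>R (\<Sum>i<n. (indicator {0..} (Z i w) * K (Z i w / h)) *\<^sub>R outer (r1 (Z i w / h)) (r1 (Z i w / h)))"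

definition Psi_plus ::
  "(nat \<Rightarrow> 'w \<Rightarrow> real) \<Rightarrow> (real \<Rightarrow> real) \<Rightarrow> (real \<Rightarrow> real) \<Rightarrow> nat \<Rightarrow> real \<Rightarrow> 'w \<Rightarrow> real^2^2" where
  "Psi_plus Z K s2 n h w = (1 / (real n * h^2)) *\<^sub>R (\<Sum>i<n. (indicator {0..} (Z i w) * (K (Z i w / h))^2 * s2 (Z i w)) *\<^sub>R outer (r1 (Z i w / h)) (r1 (Z i w / h)))"

(* X_n = c + o_p(1): convergence in probability to a constant *)
definition conv_in_prob :: "'w measure \<Rightarrow> (nat \<Rightarrow> 'w \<Rightarrow> 'b::real_normed_vector) \<Rightarrow> 'b \<Rightarrow> bool" where
  "conv_in_prob M X c \<longleftrightarrow> (\<forall>e>0. (\<lambda>n. measure M {w \<in> space M. norm (X n w - c) > e}) \<longlonglongrightarrow> 0)"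

end

theory Submission
  imports Defs
begin

(* Every entry of h^-1 Gamma_+(h) and of Psi_+(h) is a sample mean (1/n) sum_i g_h(Z_i) with
   g_h(z) = 1{z >= 0} phi(z/h) tau(z) / h^2, where phi is K or K^2 times an entry of r_1 r_1'
   and tau is 1 or sigma^2.  Substituting z = h u gives
   E g_h(Z) = int_0^oo u phi(u) (f_Z(h u) / (h u)) tau(h u) du, and since f_Z(0) = 0 the quotient
   tends to f_Z'(0); dominated convergence yields the limit f_Z'(0) tau(0) int_0^oo u phi(u) du.
   The same computation for phi^2, tau^2 shows E g_h(Z)^2 = O(h^-2), so the sample mean has
   variance O(1 / (n h^2)) -> 0 and Chebyshev's inequality gives convergence in probability,
   entry by entry. *)

lemma borel_measurable_vec_nth [measurable (raw)]:
  fixes f :: "'a \<Rightarrow> 'b::topological_space ^ 'n"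
  shows "f \<in> borel_measurable M \<Longrightarrow> (\<lambda>x. f x $ i) \<in> borel_measurable M"
  by (rule borel_measurable_continuous_on[OF continuous_on_component[OF continuous_on_id]])

lemma integrable_bounded_support:
  fixes F :: "real \<Rightarrow> 'a::{banach, second_countable_topology}"
  assumes [measurable]: "F \<in> borel_measurable borel"
    and bound: "\<And>u. norm (F u) \<le> c"
    and support: "\<And>u. u \<notin> {a..b} \<Longrightarrow> F u = 0"
  shows "integrable lborel F"
proof (rule Bochner_Integration.integrable_bound)
  have "emeasure lborel {a..b} < \<infinity>"
    by (cases "a \<le> b") auto
  then show "integrable lborel (\<lambda>u. c * indicator {a..b} u :: real)"
    by (intro integrable_mult_right integrable_real_indicator) auto
  show "AE u in lborel. norm (F u) \<le> norm (c * indicator {a..b} u :: real)"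
    using bound support by (auto simp: indicator_def intro: order_trans[OF _ abs_ge_self])
qed simp

lemma tendsto_integral_rescaled:
  fixes \<psi> g :: "real \<Rightarrow> real" and h :: "nat \<Rightarrow> real"
  assumes [measurable]: "\<psi> \<in> borel_measurable borel" "g \<in> borel_measurable borel"
    and \<psi>_int: "integrable lborel \<psi>"
    and \<psi>_support: "\<And>u. u \<notin> {0<..C} \<Longrightarrow> \<psi> u = 0"
    and g_lim: "(g \<longlongrightarrow> L) (at_right 0)"
    and h_pos: "\<And>n. h n > 0" and h_lim: "h \<longlonglongrightarrow> 0"
  shows "(\<lambda>n. \<integral>u. \<psi> u * g (h n * u) \<partial>lborel) \<longlonglongrightarrow> L * integral\<^sup>L lborel \<psi>"
proof -
  have "\<forall>\<^sub>F x in at_right 0. \<bar>g x\<bar> < \<bar>L\<bar> + 1"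
    using order_tendstoD(2)[OF tendsto_rabs[OF g_lim]] by simp
  then obtain \<eta> where \<eta>: "\<eta> > 0"
    and g_bound: "\<And>x. 0 < x \<Longrightarrow> x < \<eta> \<Longrightarrow> \<bar>g x\<bar> < \<bar>L\<bar> + 1"
    unfolding eventually_at_right[OF zero_less_one] by auto
  obtain N where N: "\<And>n. n \<ge> N \<Longrightarrow> h n * C < \<eta>"
  proof -
    have "\<forall>\<^sub>F n in sequentially. h n * C < \<eta>"
      using order_tendstoD(2)[OF tendsto_mult_left_zero[OF h_lim, of C] \<eta>] .
    then show ?thesis using that unfolding eventually_sequentially by blast
  qed
  have "(\<lambda>n. \<integral>u. \<psi> u * g (h (n + N) * u) \<partial>lborel) \<longlonglongrightarrow> (\<integral>u. \<psi> u * L \<partial>lborel)"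
  proof (rule integral_dominated_convergence)
    show "integrable lborel (\<lambda>u. (\<bar>L\<bar> + 1) * \<bar>\<psi> u\<bar>)"
      using \<psi>_int by simp
    show "AE u in lborel. norm (\<psi> u * g (h (n + N) * u)) \<le> (\<bar>L\<bar> + 1) * \<bar>\<psi> u\<bar>" for n
    proof (intro AE_I2)
      fix u
      show "norm (\<psi> u * g (h (n + N) * u)) \<le> (\<bar>L\<bar> + 1) * \<bar>\<psi> u\<bar>"
      proof (cases "u \<in> {0<..C}")
        case True
        have "h (n + N) * u \<le> h (n + N) * C"
          using True h_pos[of "n + N"] by (intro mult_left_mono) auto
        with N[of "n + N"] have "h (n + N) * u < \<eta>"
          by simp
        with True h_pos[of "n + N"] have "\<bar>g (h (n + N) * u)\<bar> \<le> \<bar>L\<bar> + 1"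
          by (intro less_imp_le g_bound) auto
        then show ?thesis
          by (simp add: abs_mult mult.commute mult_left_mono)
      qed (simp add: \<psi>_support)
    qed
    show "AE u in lborel. (\<lambda>n. \<psi> u * g (h (n + N) * u)) \<longlonglongrightarrow> \<psi> u * L"
    proof (intro AE_I2)
      fix u
      show "(\<lambda>n. \<psi> u * g (h (n + N) * u)) \<longlonglongrightarrow> \<psi> u * L"
      proof (cases "u > 0")
        case True
        have "filterlim (\<lambda>n. h n * u) (at_right 0) sequentially"
          using True h_pos
          by (intro tendsto_imp_filterlim_at_right tendsto_mult_left_zero h_lim) simp
        then have "(\<lambda>n. g (h n * u)) \<longlonglongrightarrow> L"
          by (rule filterlim_compose[OF g_lim])
        then show ?thesis
          by (intro tendsto_mult_left LIMSEQ_ignore_initial_segment)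
      qed (simp add: \<psi>_support)
    qed
  qed simp_all
  then show ?thesis
    by (simp add: LIMSEQ_offset mult.commute)
qed

definition boundary_kernel :: "(real \<Rightarrow> real) \<Rightarrow> (real \<Rightarrow> real) \<Rightarrow> real \<Rightarrow> real \<Rightarrow> real" where
  "boundary_kernel \<phi> \<tau> h z = indicator {0..} z * \<phi> (z / h) * \<tau> z / h\<^sup>2"

lemma boundary_kernel_measurable [measurable]:
  assumes "\<phi> \<in> borel_measurable borel" "\<tau> \<in> borel_measurable borel"
  shows "boundary_kernel \<phi> \<tau> h \<in> borel_measurable borel"
  unfolding boundary_kernel_def using assms by measurable

lemma boundary_kernel_square:
  "(boundary_kernel \<phi> \<tau> h z)\<^sup>2 = boundary_kernel (\<lambda>u. (\<phi> u)\<^sup>2) (\<lambda>u. (\<tau> u)\<^sup>2) h z / h\<^sup>2"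
  unfolding boundary_kernel_def by (simp add: indicator_def power2_eq_square)

lemma integral_density_boundary_kernel:
  fixes f :: "real \<Rightarrow> real"
  assumes h: "h > 0" and f0: "f 0 = 0"
  shows "(\<integral>z. f z * boundary_kernel \<phi> \<tau> h z \<partial>lborel)
    = (\<integral>u. (indicator {0..} u * u * \<phi> u) * (f (h * u) / (h * u) * \<tau> (h * u)) \<partial>lborel)"
proof -
  have "(\<integral>z. f z * boundary_kernel \<phi> \<tau> h z \<partial>lborel)
      = \<bar>h\<bar> *\<^sub>R (\<integral>u. f (0 + h * u) * boundary_kernel \<phi> \<tau> h (0 + h * u) \<partial>lborel)"
    using h by (intro lborel_integral_real_affine) auto
  also have "\<dots> = (\<integral>u. h * (f (h * u) * boundary_kernel \<phi> \<tau> h (h * u)) \<partial>lborel)"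
    using h by simp
  also have "\<dots> = (\<integral>u. (indicator {0..} u * u * \<phi> u) * (f (h * u) / (h * u) * \<tau> (h * u)) \<partial>lborel)"
  proof (rule Bochner_Integration.integral_cong[OF refl])
    fix u :: real
    \<comment> \<open>at \<open>u = 0\<close> the right side has the junk quotient \<open>0 / 0 = 0\<close>;
      the left side vanishes because \<open>f 0 = 0\<close>\<close>
    consider "u < 0" | "u = 0" | "u > 0" by linarith
    then show "h * (f (h * u) * boundary_kernel \<phi> \<tau> h (h * u))
      = (indicator {0..} u * u * \<phi> u) * (f (h * u) / (h * u) * \<tau> (h * u))"
      by cases (use h f0 in \<open>auto simp: boundary_kernel_def indicator_def power2_eq_square
        mult_less_0_iff zero_le_mult_iff\<close>)
  qed
  finally show ?thesis .
qed

lemma tendsto_integral_density_boundary_kernel: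
  fixes f \<phi> \<tau> :: "real \<Rightarrow> real" and h :: "nat \<Rightarrow> real"
  assumes f0: "f 0 = 0" and f_deriv: "(f has_real_derivative d) (at 0 within {0..\<delta>})" and "\<delta> > 0"
    and [measurable]: "f \<in> borel_measurable borel" "\<phi> \<in> borel_measurable borel" "\<tau> \<in> borel_measurable borel"
    and \<phi>_bound: "\<And>u. \<bar>\<phi> u\<bar> \<le> B" and \<phi>_support: "\<And>u. u > C \<Longrightarrow> \<phi> u = 0"
    and \<tau>_cont: "continuous (at 0 within {0..}) \<tau>"
    and h_pos: "\<And>n. h n > 0" and h_lim: "h \<longlonglongrightarrow> 0"
  shows "(\<lambda>n. \<integral>z. f z * boundary_kernel \<phi> \<tau> (h n) z \<partial>lborel)
    \<longlonglongrightarrow> d * \<tau> 0 * (LINT u:{0..}|lborel. u * \<phi> u)"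
proof -
  define \<psi> where "\<psi> u = indicator {0..} u * u * \<phi> u" for u
  have \<psi>_support: "\<psi> u = 0" if "u \<notin> {0<..C}" for u
    using that \<phi>_support[of u] by (cases "u = 0") (auto simp: \<psi>_def not_less)
  have \<psi>_measurable [measurable]: "\<psi> \<in> borel_measurable borel"
    unfolding \<psi>_def by measurable
  have \<psi>_bound: "\<bar>\<psi> u\<bar> \<le> \<bar>C\<bar> * B" for u
  proof (cases "u \<in> {0<..C}")
    case True
    then show ?thesis
      unfolding \<psi>_def abs_mult using \<phi>_bound[of u] by (intro mult_mono) auto
  qed (use \<psi>_support \<phi>_bound[of 0] in simp)
  have \<psi>_integrable: "integrable lborel \<psi>"
    using \<psi>_bound \<psi>_support by (intro integrable_bounded_support[where a=0 and b=C]) auto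
  have quotient_lim: "((\<lambda>x. f x / x * \<tau> x) \<longlongrightarrow> d * \<tau> 0) (at_right 0)"
  proof (rule tendsto_mult)
    show "((\<lambda>x. f x / x) \<longlongrightarrow> d) (at_right 0)"
      using f_deriv \<open>\<delta> > 0\<close> by (simp add: has_field_derivative_iff f0 at_within_Icc_at_right)
    show "(\<tau> \<longlongrightarrow> \<tau> 0) (at_right 0)"
      using \<tau>_cont by (simp add: continuous_within at_within_Ici_at_right)
  qed
  have "(\<lambda>n. \<integral>u. \<psi> u * (f (h n * u) / (h n * u) * \<tau> (h n * u)) \<partial>lborel)
      \<longlonglongrightarrow> d * \<tau> 0 * integral\<^sup>L lborel \<psi>"
    by (rule tendsto_integral_rescaled[OF \<psi>_measurable _ \<psi>_integrable \<psi>_support quotient_lim h_pos h_lim])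
      measurable
  moreover have "integral\<^sup>L lborel \<psi> = (LINT u:{0..}|lborel. u * \<phi> u)"
    by (simp add: \<psi>_def[abs_def] set_lebesgue_integral_def mult.assoc)
  ultimately show ?thesis
    unfolding integral_density_boundary_kernel[OF h_pos, of f, OF f0] \<psi>_def[symmetric] by simp
qed

lemma (in prob_space) expectation_square_sum_indep:
  fixes X :: "nat \<Rightarrow> 'a \<Rightarrow> real"
  assumes indep: "indep_vars (\<lambda>_. borel) X UNIV"
    and bound: "\<And>i x. \<bar>X i x\<bar> \<le> B"
    and centered: "\<And>i. expectation (X i) = 0"
  shows "expectation (\<lambda>x. (\<Sum>i<n. X i x)\<^sup>2) = (\<Sum>i<n. expectation (\<lambda>x. (X i x)\<^sup>2))"
proof -
  have [measurable]: "X i \<in> borel_measurable M" for i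
    using indep unfolding indep_vars_def by auto
  have integrable_X: "integrable M (X i)" for i
    using bound by (intro integrable_const_bound[where B=B]) auto
  have integrable_XX: "integrable M (\<lambda>x. X i x * X j x)" for i j
    using bound by (intro integrable_const_bound[where B="B * B"] AE_I2)
      (auto simp: abs_mult intro: mult_mono order_trans[OF abs_ge_zero])
  have cross: "expectation (\<lambda>x. X i x * X j x) = (if i = j then expectation (\<lambda>x. (X i x)\<^sup>2) else 0)"
    for i j
  proof (cases "i = j")
    case False
    have "expectation (\<lambda>x. \<Prod>k\<in>{i, j}. X k x) = (\<Prod>k\<in>{i, j}. expectation (X k))"
      using integrable_X by (intro indep_vars_lebesgue_integral indep_vars_subset[OF indep]) auto
    then show ?thesis using False centered by simp
  qed (simp add: power2_eq_square)
  have "expectation (\<lambda>x. (\<Sum>i<n. X i x)\<^sup>2) = expectation (\<lambda>x. \<Sum>i<n. \<Sum>j<n. X i x * X j x)"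
    by (simp add: power2_eq_square sum_product)
  also have "\<dots> = (\<Sum>i<n. \<Sum>j<n. expectation (\<lambda>x. X i x * X j x))"
    using integrable_XX by simp
  also have "\<dots> = (\<Sum>i<n. expectation (\<lambda>x. (X i x)\<^sup>2))"
    by (simp add: cross)
  finally show ?thesis .
qed

lemma (in prob_space) prob_sample_mean_deviation_le:
  fixes Y :: "nat \<Rightarrow> 'a \<Rightarrow> real"
  assumes indep: "indep_vars (\<lambda>_. borel) Y UNIV"
    and bound: "\<And>i x. \<bar>Y i x\<bar> \<le> B"
    and mean: "\<And>i. expectation (Y i) = m"
    and var: "\<And>i. variance (Y i) \<le> v"
    and "a > 0" "n > 0"
  shows "prob {x \<in> space M. a \<le> \<bar>(1 / real n) * (\<Sum>i<n. Y i x) - m\<bar>} \<le> v / (real n * a\<^sup>2)"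
proof -
  have [measurable]: "Y i \<in> borel_measurable M" for i
    using indep unfolding indep_vars_def by auto
  define S where "S = (\<lambda>x. (1 / real n) * (\<Sum>i<n. Y i x))"
  define X where "X = (\<lambda>i x. Y i x - m)"
  have S_measurable [measurable]: "S \<in> borel_measurable M"
    unfolding S_def by measurable
  have integrable_Y: "integrable M (Y i)" for i
    using bound by (intro integrable_const_bound[where B=B]) auto
  have S_eq: "S x = m + (1 / real n) * (\<Sum>i<n. X i x)" for x
    using \<open>n > 0\<close> by (simp add: S_def X_def sum_subtractf field_simps)
  have S_mean: "expectation S = m"
    using integrable_Y \<open>n > 0\<close> by (simp add: S_def mean)
  have S_bound: "\<bar>S x\<bar> \<le> B" for x
  proof -
    have "\<bar>\<Sum>i<n. Y i x\<bar> \<le> (\<Sum>i<n. \<bar>Y i x\<bar>)"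
      by (rule sum_abs)
    also have "\<dots> \<le> real n * B"
      using sum_bounded_above[of "{..<n}" "\<lambda>i. \<bar>Y i x\<bar>" B] bound by simp
    finally
    show ?thesis
      using \<open>n > 0\<close> by (simp add: S_def abs_mult field_simps)
  qed
  have "(S x)\<^sup>2 \<le> B\<^sup>2" for x
    using power_mono[OF S_bound abs_ge_zero, where n=2] by simp
  then have "integrable M (\<lambda>x. (S x)\<^sup>2)"
    by (intro integrable_const_bound[where B="B\<^sup>2"] AE_I2) auto
  then have "prob {x \<in> space M. a \<le> \<bar>S x - m\<bar>} \<le> variance S / a\<^sup>2"
    using Chebyshev_inequality[OF S_measurable _ \<open>a > 0\<close>] by (simp add: S_mean)
  also have "variance S = (1 / real n)\<^sup>2 * expectation (\<lambda>x. (\<Sum>i<n. X i x)\<^sup>2)"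
    by (simp add: S_mean S_eq power_divide)
  also have "\<dots> = (1 / real n)\<^sup>2 * (\<Sum>i<n. variance (Y i))"
  proof -
    have "indep_vars (\<lambda>_. borel) X UNIV"
      using indep_vars_compose2[OF indep, of "\<lambda>_ y. y - m"] unfolding X_def by simp
    moreover have "\<bar>X i x\<bar> \<le> B + \<bar>m\<bar>" for i x
      using bound[of i x] unfolding X_def by linarith
    moreover have "expectation (X i) = 0" for i
      using integrable_Y by (simp add: X_def mean prob_space)
    ultimately have "expectation (\<lambda>x. (\<Sum>i<n. X i x)\<^sup>2) = (\<Sum>i<n. expectation (\<lambda>x. (X i x)\<^sup>2))"
      by (rule expectation_square_sum_indep)
    then show ?thesis
      by (simp add: X_def mean)
  qed
  also have "\<dots> \<le> (1 / real n)\<^sup>2 * (real n * v)"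
    using sum_bounded_above[of "{..<n}" "\<lambda>i. variance (Y i)" v] var by (intro mult_left_mono) auto
  finally show ?thesis
    using \<open>n > 0\<close> by (simp add: S_def power2_eq_square divide_right_mono field_simps)
qed

lemma (in prob_space) conv_in_prob_triangular_sample_mean:
  fixes Y :: "nat \<Rightarrow> nat \<Rightarrow> 'a \<Rightarrow> real"
  assumes indep: "\<And>n. indep_vars (\<lambda>_. borel) (Y n) UNIV"
    and bounded: "\<And>n. \<exists>B. \<forall>i x. \<bar>Y n i x\<bar> \<le> B"
    and mean: "\<And>n i. expectation (Y n i) = m n" and mean_lim: "m \<longlonglongrightarrow> \<mu>"
    and var: "\<And>n i. variance (Y n i) \<le> v n" and var_lim: "(\<lambda>n. v n / real n) \<longlonglongrightarrow> 0"
  shows "conv_in_prob M (\<lambda>n x. (1 / real n) * (\<Sum>i<n. Y n i x)) \<mu>"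
  unfolding conv_in_prob_def
proof (intro allI impI)
  fix e :: real
  assume "e > 0"
  have [measurable]: "Y n i \<in> borel_measurable M" for n i
    using indep unfolding indep_vars_def by auto
  define S where "S n x = (1 / real n) * (\<Sum>i<n. Y n i x)" for n x
  have upper: "\<forall>\<^sub>F n in sequentially. prob {x \<in> space M. norm (S n x - \<mu>) > e} \<le> v n / (real n * (e / 2)\<^sup>2)"
    using tendstoD[OF mean_lim half_gt_zero[OF \<open>e > 0\<close>]] eventually_gt_at_top[of 0]
  proof eventually_elim
    case (elim n)
    obtain B where B: "\<And>i x. \<bar>Y n i x\<bar> \<le> B"
      using bounded by blast
    have "e / 2 \<le> \<bar>S n x - m n\<bar>" if "e < \<bar>S n x - \<mu>\<bar>" for x
      using that elim(1) unfolding dist_real_def by linarith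
    then have "{x \<in> space M. norm (S n x - \<mu>) > e} \<subseteq> {x \<in> space M. e / 2 \<le> \<bar>S n x - m n\<bar>}"
      by auto
    then have "prob {x \<in> space M. norm (S n x - \<mu>) > e} \<le> prob {x \<in> space M. e / 2 \<le> \<bar>S n x - m n\<bar>}"
      by (intro finite_measure_mono) (measurable, simp add: S_def)
    also have "\<dots> \<le> v n / (real n * (e / 2)\<^sup>2)"
      unfolding S_def
      by (rule prob_sample_mean_deviation_le) (use indep B mean var \<open>e > 0\<close> elim(2) in auto)
    finally show ?case .
  qed
  have bound_lim: "(\<lambda>n. v n / (real n * (e / 2)\<^sup>2)) \<longlonglongrightarrow> 0"
    using tendsto_divide_zero[OF var_lim, of "(e / 2)\<^sup>2"] by (simp add: divide_divide_eq_left)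
  have "(\<lambda>n. prob {x \<in> space M. norm (S n x - \<mu>) > e}) \<longlonglongrightarrow> 0"
    by (rule tendsto_sandwich[OF _ upper tendsto_const bound_lim]) simp
  then show "(\<lambda>n. prob {x \<in> space M. norm ((1 / real n) * (\<Sum>i<n. Y n i x) - \<mu>) > e}) \<longlonglongrightarrow> 0"
    by (simp add: S_def)
qed

lemma (in prob_space) conv_in_prob_boundary_kernel_mean:
  fixes Z :: "nat \<Rightarrow> 'a \<Rightarrow> real" and f \<phi> \<tau> :: "real \<Rightarrow> real" and h :: "nat \<Rightarrow> real"
  assumes indep: "indep_vars (\<lambda>_. borel) Z UNIV"
    and density: "\<And>i. distributed M lborel (Z i) (\<lambda>x. ennreal (f x))" and f_nonneg: "\<And>x. f x \<ge> 0"
    and f0: "f 0 = 0" and f_deriv: "(f has_real_derivative d) (at 0 within {0..\<delta>})" and "\<delta> > 0"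
    and [measurable]: "\<phi> \<in> borel_measurable borel" "\<tau> \<in> borel_measurable borel"
    and \<phi>_bound: "\<And>u. \<bar>\<phi> u\<bar> \<le> B" and \<phi>_support: "\<And>u. u > C \<Longrightarrow> \<phi> u = 0"
    and \<tau>_bound: "\<And>u. \<bar>\<tau> u\<bar> \<le> T" and \<tau>_cont: "continuous (at 0 within {0..}) \<tau>"
    and h_pos: "\<And>n. h n > 0" and h_lim: "h \<longlonglongrightarrow> 0"
    and nh2: "filterlim (\<lambda>n. real n * (h n)\<^sup>2) at_top sequentially"
  shows "conv_in_prob M (\<lambda>n x. (1 / real n) * (\<Sum>i<n. boundary_kernel \<phi> \<tau> (h n) (Z i x)))
    (d * \<tau> 0 * (LINT u:{0..}|lborel. u * \<phi> u))"
proof (rule conv_in_prob_triangular_sample_mean)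
  have [measurable]: "f \<in> borel_measurable borel"
    using distributed_real_measurable[OF _ density[of 0]] f_nonneg by simp
  have [measurable]: "Z i \<in> borel_measurable M" for i
    using distributed_measurable[OF density[of i]] by simp
  define m where "m n = (\<integral>z. f z * boundary_kernel \<phi> \<tau> (h n) z \<partial>lborel)" for n
  define v where "v n = (\<integral>z. f z * (boundary_kernel \<phi> \<tau> (h n) z)\<^sup>2 \<partial>lborel)" for n
  show "indep_vars (\<lambda>_. borel) (\<lambda>i x. boundary_kernel \<phi> \<tau> (h n) (Z i x)) UNIV" for n
    using indep_vars_compose2[OF indep, of "\<lambda>_. boundary_kernel \<phi> \<tau> (h n)"] by simp
  have kernel_bound: "\<bar>boundary_kernel \<phi> \<tau> (h n) z\<bar> \<le> B * T / (h n)\<^sup>2" for n z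
  proof -
    have "\<bar>indicator {0..} z * \<phi> (z / h n) * \<tau> z\<bar> \<le> 1 * B * T"
      unfolding abs_mult using \<phi>_bound \<tau>_bound
      by (intro mult_mono) (auto simp: indicator_def intro: order_trans[OF abs_ge_zero])
    then show ?thesis
      unfolding boundary_kernel_def by (simp add: divide_right_mono)
  qed
  then show "\<exists>B'. \<forall>i x. \<bar>boundary_kernel \<phi> \<tau> (h n) (Z i x)\<bar> \<le> B'" for n
    by blast
  show "expectation (\<lambda>x. boundary_kernel \<phi> \<tau> (h n) (Z i x)) = m n" for n i
    unfolding m_def by (rule distributed_integral[OF density, symmetric]) (auto simp: f_nonneg)
  show "m \<longlonglongrightarrow> d * \<tau> 0 * (LINT u:{0..}|lborel. u * \<phi> u)"
    unfolding m_def
    by (rule tendsto_integral_density_boundary_kernel[OF f0 f_deriv \<open>\<delta> > 0\<close> _ _ _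
          \<phi>_bound \<phi>_support \<tau>_cont h_pos h_lim]) measurable
  show "variance (\<lambda>x. boundary_kernel \<phi> \<tau> (h n) (Z i x)) \<le> v n" for n i
  proof -
    have "expectation (\<lambda>x. (boundary_kernel \<phi> \<tau> (h n) (Z i x))\<^sup>2) = v n"
      unfolding v_def by (rule distributed_integral[OF density, symmetric]) (auto simp: f_nonneg)
    moreover have "integrable M (\<lambda>x. boundary_kernel \<phi> \<tau> (h n) (Z i x))"
      using kernel_bound by (intro integrable_const_bound[where B="B * T / (h n)\<^sup>2"]) auto
    moreover have "integrable M (\<lambda>x. (boundary_kernel \<phi> \<tau> (h n) (Z i x))\<^sup>2)"
      using power_mono[OF kernel_bound abs_ge_zero, where n=2]
      by (intro integrable_const_bound[where B="(B * T / (h n)\<^sup>2)\<^sup>2"] AE_I2) simp_all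
    ultimately show ?thesis
      by (simp add: variance_eq)
  qed
  have "(\<lambda>n. \<integral>z. f z * boundary_kernel (\<lambda>u. (\<phi> u)\<^sup>2) (\<lambda>u. (\<tau> u)\<^sup>2) (h n) z \<partial>lborel)
      \<longlonglongrightarrow> d * (\<tau> 0)\<^sup>2 * (LINT u:{0..}|lborel. u * (\<phi> u)\<^sup>2)"
  proof (rule tendsto_integral_density_boundary_kernel[OF f0 f_deriv \<open>\<delta> > 0\<close>])
    show "\<bar>(\<phi> u)\<^sup>2\<bar> \<le> B\<^sup>2" for u
      using power_mono[OF \<phi>_bound abs_ge_zero, where n=2] by simp
    show "continuous (at 0 within {0..}) (\<lambda>u. (\<tau> u)\<^sup>2)"
      using \<tau>_cont by (rule continuous_power)
  qed (use \<phi>_support h_pos h_lim in \<open>auto\<close>)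
  then have "(\<lambda>n. (\<integral>z. f z * boundary_kernel (\<lambda>u. (\<phi> u)\<^sup>2) (\<lambda>u. (\<tau> u)\<^sup>2) (h n) z \<partial>lborel)
      / (real n * (h n)\<^sup>2)) \<longlonglongrightarrow> 0"
    by (rule tendsto_divide_0[OF _ filterlim_at_top_imp_at_infinity[OF nh2]])
  moreover have "v n = (\<integral>z. f z * boundary_kernel (\<lambda>u. (\<phi> u)\<^sup>2) (\<lambda>u. (\<tau> u)\<^sup>2) (h n) z \<partial>lborel)
      / (h n)\<^sup>2" for n
    by (simp add: v_def boundary_kernel_square)
  ultimately show "(\<lambda>n. v n / real n) \<longlonglongrightarrow> 0"
    by (simp add: mult.commute)
qed

lemma conv_in_prob_vec:
  fixes X :: "nat \<Rightarrow> 'w \<Rightarrow> 'a::{real_normed_vector, second_countable_topology} ^ 'n"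
  assumes "prob_space M"
    and measurable: "\<And>n i. (\<lambda>x. X n x $ i) \<in> borel_measurable M"
    and components: "\<And>i. conv_in_prob M (\<lambda>n x. X n x $ i) (c $ i)"
  shows "conv_in_prob M X c"
  unfolding conv_in_prob_def
proof (intro allI impI)
  interpret prob_space M by fact
  fix e :: real
  assume "e > 0"
  define A where "A n i = {x \<in> space M. norm (X n x $ i - c $ i) > e / CARD('n)}" for n i
  have A_sets: "A n i \<in> sets M" for n i
    unfolding A_def using measurable by measurable
  have "{x \<in> space M. norm (X n x - c) > e} \<subseteq> (\<Union>i. A n i)" for n
  proof (intro subsetI)
    fix x
    assume x: "x \<in> {x \<in> space M. norm (X n x - c) > e}"
    show "x \<in> (\<Union>i. A n i)"
    proof (rule ccontr)
      assume "x \<notin> (\<Union>i. A n i)"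
      then have small: "norm ((X n x - c) $ i) \<le> e / CARD('n)" for i
        using x by (auto simp: A_def not_less)
      have "(\<Sum>i\<in>UNIV. norm ((X n x - c) $ i)) \<le> (\<Sum>i\<in>(UNIV :: 'n set). e / CARD('n))"
        by (rule sum_mono) (rule small)
      moreover have "norm (X n x - c) \<le> (\<Sum>i\<in>UNIV. norm ((X n x - c) $ i))"
        by (simp add: norm_vec_def L2_set_le_sum)
      ultimately have "norm (X n x - c) \<le> e"
        by simp
      then show False
        using x by simp
    qed
  qed
  then have upper: "measure M {x \<in> space M. norm (X n x - c) > e} \<le> (\<Sum>i\<in>UNIV. measure M (A n i))" for n
    using A_sets by (intro order_trans[OF finite_measure_mono measure_UNION_le]) auto
  have upper_lim: "(\<lambda>n. \<Sum>i\<in>UNIV. measure M (A n i)) \<longlonglongrightarrow> 0"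
    using components \<open>e > 0\<close> unfolding conv_in_prob_def A_def by (intro tendsto_null_sum) simp
  show "(\<lambda>n. measure M {x \<in> space M. norm (X n x - c) > e}) \<longlonglongrightarrow> 0"
    by (rule tendsto_sandwich[OF _ _ tendsto_const upper_lim]) (simp_all add: upper)
qed

lemma r1_nth: "r1 z $ i = (if i = 1 then 1 else z)"
  using exhaust_2[of i] by (auto simp: r1_def)

lemma abs_r1_nth_le: "\<bar>r1 z $ i\<bar> \<le> 1 + \<bar>z\<bar>"
  by (simp add: r1_nth)

lemma continuous_on_r1_nth [continuous_intros]: "continuous_on S (\<lambda>z. r1 z $ i)"
  by (cases "i = 1") (simp_all add: r1_nth continuous_on_id)

lemma borel_measurable_r1_nth [measurable]: "(\<lambda>z. r1 z $ i) \<in> borel_measurable borel"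
  by (rule borel_measurable_continuous_onI[OF continuous_on_r1_nth])

lemma outer_nth: "outer u v $ i $ j = u $ i * v $ j"
  by (simp add: outer_def)

lemma continuous_on_outer_r1: "continuous_on S (\<lambda>z. outer (r1 z) (r1 z))"
  unfolding outer_def by (intro continuous_on_vec_lambda continuous_intros)

lemma borel_measurable_outer_r1 [measurable]: "(\<lambda>z. outer (r1 z) (r1 z)) \<in> borel_measurable borel"
  by (rule borel_measurable_continuous_onI[OF continuous_on_outer_r1])

lemma set_integral_bounded_linear:
  fixes F :: "'a \<Rightarrow> 'b::{banach, second_countable_topology}"
    and T :: "'b \<Rightarrow> 'c::{banach, second_countable_topology}"
  assumes "bounded_linear T" "set_integrable M A F"
  shows "T (LINT x:A|M. F x) = (LINT x:A|M. T (F x))"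
  using assms integral_bounded_linear[of T M "\<lambda>x. indicator A x *\<^sub>R F x"]
  unfolding set_integrable_def set_lebesgue_integral_def by (simp add: linear_simps)

lemma set_integrable_outer_r1:
  fixes w :: "real \<Rightarrow> real"
  assumes [measurable]: "w \<in> borel_measurable borel"
    and w_bound: "\<And>u. \<bar>w u\<bar> \<le> B" and w_support: "\<And>u. \<bar>u\<bar> > C \<Longrightarrow> w u = 0"
  shows "set_integrable lborel {0..} (\<lambda>z. (z * w z) *\<^sub>R outer (r1 z) (r1 z))"
proof -
  have "bounded ((\<lambda>z. outer (r1 z) (r1 z)) ` {-C..C})"
    by (intro compact_imp_bounded compact_continuous_image continuous_on_outer_r1 compact_Icc)
  then obtain R where R: "\<And>z. z \<in> {-C..C} \<Longrightarrow> norm (outer (r1 z) (r1 z)) \<le> R"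
    unfolding bounded_iff by blast
  have "B \<ge> 0"
    using w_bound[of 0] by simp
  have matrix_bound: "norm (indicator {0..} z *\<^sub>R (z * w z) *\<^sub>R outer (r1 z) (r1 z)) \<le> \<bar>C\<bar> * B * \<bar>R\<bar>" for z
  proof (cases "\<bar>z\<bar> \<le> C")
    case True
    have "norm (indicator {0..} z *\<^sub>R (z * w z) *\<^sub>R outer (r1 z) (r1 z))
        \<le> \<bar>z\<bar> * \<bar>w z\<bar> * norm (outer (r1 z) (r1 z))"
      by (cases "z \<ge> 0") (simp_all add: abs_mult mult_nonpos_nonneg)
    also have "\<dots> \<le> \<bar>C\<bar> * B * \<bar>R\<bar>"
    proof (intro mult_mono)
      show "norm (outer (r1 z) (r1 z)) \<le> \<bar>R\<bar>"
        using True R[of z] by (simp add: abs_le_iff)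
    qed (use True w_bound[of z] \<open>B \<ge> 0\<close> in auto)
    finally show ?thesis .
  qed (use w_support \<open>B \<ge> 0\<close> in auto)
  then show ?thesis
    unfolding set_integrable_def using w_support
    by (intro integrable_bounded_support[where a="-C" and b=C, OF _ matrix_bound]) auto
qed

lemma set_integral_outer_r1_nth:
  assumes "set_integrable lborel {0..} (\<lambda>z. (z * w z) *\<^sub>R outer (r1 z) (r1 z))"
  shows "(LINT z:{0..}|lborel. (z * w z) *\<^sub>R outer (r1 z) (r1 z)) $ j $ k
    = (LINT u:{0..}|lborel. u * (w u * (r1 u $ j * r1 u $ k)))"
proof -
  have "bounded_linear (\<lambda>A :: real^2^2. A $ j $ k)"
    by (rule bounded_linear_compose[OF bounded_linear_vec_nth bounded_linear_vec_nth])
  then have "(LINT z:{0..}|lborel. (z * w z) *\<^sub>R outer (r1 z) (r1 z)) $ j $ k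
      = (LINT z:{0..}|lborel. ((z * w z) *\<^sub>R outer (r1 z) (r1 z)) $ j $ k)"
    by (rule set_integral_bounded_linear[OF _ assms])
  then show ?thesis
    by (simp add: outer_nth mult.assoc)
qed

definition boundary_moment_matrix ::
  "(nat \<Rightarrow> 'w \<Rightarrow> real) \<Rightarrow> (real \<Rightarrow> real) \<Rightarrow> (real \<Rightarrow> real) \<Rightarrow> nat \<Rightarrow> real \<Rightarrow> 'w \<Rightarrow> real^2^2" where
  "boundary_moment_matrix Z w \<tau> n h x = (1 / (real n * h\<^sup>2)) *\<^sub>R
    (\<Sum>i<n. (indicator {0..} (Z i x) * w (Z i x / h) * \<tau> (Z i x)) *\<^sub>R outer (r1 (Z i x / h)) (r1 (Z i x / h)))"

lemma boundary_moment_matrix_nth: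
  "boundary_moment_matrix Z w \<tau> n h x $ j $ k
    = (1 / real n) * (\<Sum>i<n. boundary_kernel (\<lambda>u. w u * (r1 u $ j * r1 u $ k)) \<tau> h (Z i x))"
  unfolding boundary_moment_matrix_def boundary_kernel_def sum_distrib_left
  by (simp add: outer_nth power2_eq_square mult_ac sum_divide_distrib)

lemma Gamma_plus_eq_boundary_moment_matrix:
  "(1 / h) *\<^sub>R Gamma_plus Z K n h x = boundary_moment_matrix Z K (\<lambda>_. 1) n h x"
  by (simp add: Gamma_plus_def boundary_moment_matrix_def power2_eq_square mult_ac)

lemma Psi_plus_eq_boundary_moment_matrix:
  "Psi_plus Z K s2 n h x = boundary_moment_matrix Z (\<lambda>u. (K u)\<^sup>2) s2 n h x"
  by (simp add: Psi_plus_def boundary_moment_matrix_def)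

lemma (in prob_space) conv_in_prob_boundary_moment_matrix:
  fixes Z :: "nat \<Rightarrow> 'a \<Rightarrow> real" and f w \<tau> :: "real \<Rightarrow> real" and h :: "nat \<Rightarrow> real"
  assumes indep: "indep_vars (\<lambda>_. borel) Z UNIV"
    and density: "\<And>i. distributed M lborel (Z i) (\<lambda>x. ennreal (f x))" and f_nonneg: "\<And>x. f x \<ge> 0"
    and f0: "f 0 = 0" and f_deriv: "(f has_real_derivative d) (at 0 within {0..\<delta>})" and "\<delta> > 0"
    and [measurable]: "w \<in> borel_measurable borel"
    and \<tau>_measurable [measurable]: "\<tau> \<in> borel_measurable borel"
    and w_bound: "\<And>u. \<bar>w u\<bar> \<le> B" and w_support: "\<And>u. \<bar>u\<bar> > C \<Longrightarrow> w u = 0"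
    and \<tau>_bound: "\<And>u. \<bar>\<tau> u\<bar> \<le> T" and \<tau>_cont: "continuous (at 0 within {0..}) \<tau>"
    and h_pos: "\<And>n. h n > 0" and h_lim: "h \<longlonglongrightarrow> 0"
    and nh2: "filterlim (\<lambda>n. real n * (h n)\<^sup>2) at_top sequentially"
  shows "conv_in_prob M (\<lambda>n x. boundary_moment_matrix Z w \<tau> n (h n) x)
    ((d * \<tau> 0) *\<^sub>R (LINT z:{0..}|lborel. (z * w z) *\<^sub>R outer (r1 z) (r1 z)))"
proof -
  have [measurable]: "Z i \<in> borel_measurable M" for i
    using distributed_measurable[OF density[of i]] by simp
  have measurable_matrix: "(\<lambda>x. boundary_moment_matrix Z w \<tau> n (h n) x) \<in> borel_measurable M" for n
    unfolding boundary_moment_matrix_def by measurable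
  have limit_nth: "(LINT z:{0..}|lborel. (z * w z) *\<^sub>R outer (r1 z) (r1 z)) $ j $ k
      = (LINT u:{0..}|lborel. u * (w u * (r1 u $ j * r1 u $ k)))" for j k
    by (rule set_integral_outer_r1_nth[OF set_integrable_outer_r1[OF _ w_bound w_support]]) measurable
  show ?thesis
  proof (intro conv_in_prob_vec[OF prob_space_axioms] measurable_matrix borel_measurable_vec_nth)
    fix j k
    have entry_bound: "\<bar>w u * (r1 u $ j * r1 u $ k)\<bar> \<le> B * (1 + \<bar>C\<bar>)\<^sup>2" for u
    proof (cases "\<bar>u\<bar> \<le> C")
      case True
      have "\<bar>r1 u $ j * r1 u $ k\<bar> \<le> (1 + \<bar>C\<bar>) * (1 + \<bar>C\<bar>)"
        unfolding abs_mult using True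
        by (intro mult_mono order_trans[OF abs_r1_nth_le]) auto
      then show ?thesis
        unfolding abs_mult[of "w u"] power2_eq_square using w_bound[of u] by (intro mult_mono) auto
    qed (use w_support w_bound[of 0] in auto)
    have entry_support: "w u * (r1 u $ j * r1 u $ k) = 0" if "u > \<bar>C\<bar>" for u
      using that w_support[of u] by simp
    have entry_measurable: "(\<lambda>u. w u * (r1 u $ j * r1 u $ k)) \<in> borel_measurable borel"
      by measurable
    have "conv_in_prob M (\<lambda>n x. (1 / real n) *
        (\<Sum>i<n. boundary_kernel (\<lambda>u. w u * (r1 u $ j * r1 u $ k)) \<tau> (h n) (Z i x)))
      (d * \<tau> 0 * (LINT u:{0..}|lborel. u * (w u * (r1 u $ j * r1 u $ k))))"
      by (rule conv_in_prob_boundary_kernel_mean[OF indep density f_nonneg f0 f_deriv \<open>\<delta> > 0\<close>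
            entry_measurable \<tau>_measurable entry_bound entry_support \<tau>_bound \<tau>_cont h_pos h_lim nh2])
    then show "conv_in_prob M (\<lambda>n x. boundary_moment_matrix Z w \<tau> n (h n) x $ j $ k)
      (((d * \<tau> 0) *\<^sub>R (LINT z:{0..}|lborel. (z * w z) *\<^sub>R outer (r1 z) (r1 z))) $ j $ k)"
      by (simp add: boundary_moment_matrix_nth limit_nth)
  qed
qed

theorem propositionF1:
  fixes M :: "'w measure"
    and Z :: "nat \<Rightarrow> 'w \<Rightarrow> real"
    and fZ fZ' :: "real \<Rightarrow> real"
    and \<delta> :: real
    and \<sigma>2 :: "real \<Rightarrow> real"
    and K :: "real \<Rightarrow> real"
    and CK :: real
    and h :: "nat \<Rightarrow> real"
  assumes "prob_space M"
    and indep: "prob_space.indep_vars M (\<lambda>_. borel) Z UNIV"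
    and dens: "\<And>i. distributed M lborel (Z i) (\<lambda>x. ennreal (fZ x))"
    and fZ_nonneg: "\<And>x. fZ x \<ge> 0"
    and fZ0: "fZ 0 = 0"
    and \<delta>_pos: "\<delta> > 0"
    and fZ_deriv: "\<And>x. x \<in> {0..\<delta>} \<Longrightarrow> (fZ has_real_derivative fZ' x) (at x within {0..\<delta>})"
    and fZ'_cont: "continuous_on {0..\<delta>} fZ'"
    and \<sigma>2_meas: "\<sigma>2 \<in> borel_measurable borel"
    and \<sigma>2_nonneg: "\<And>z. \<sigma>2 z \<ge> 0"
    and \<sigma>2_bdd: "bounded (range \<sigma>2)"
    and \<sigma>2_rcont: "continuous (at 0 within {0..}) \<sigma>2"
    and K_meas: "K \<in> borel_measurable borel"
    and K_nonneg: "\<And>z. K z \<ge> 0"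
    and K_bdd: "bounded (range K)"
    and CK_pos: "CK > 0"
    and K_supp: "\<And>z. \<bar>z\<bar> > CK \<Longrightarrow> K z = 0"
    and K_int_pos: "(LINT z:{0..}|lborel. K z) = 1"
    and K_int_neg: "(LINT z:{..<0}|lborel. K z) = 1"
    and K_nonsing_pos: "invertible (LINT z:{0..}|lborel. K z *\<^sub>R outer (r1 z) (r1 z))"
    and K_nonsing_neg: "invertible (LINT z:{..<0}|lborel. K z *\<^sub>R outer (r1 z) (r1 z))"
    and h_pos: "\<And>n. h n > 0"
    and h_lim: "h \<longlonglongrightarrow> 0"
    and nh2: "filterlim (\<lambda>n. real n * (h n)\<^sup>2) at_top sequentially"
  shows "conv_in_prob M (\<lambda>n \<omega>. (1 / h n) *\<^sub>R Gamma_plus Z K n (h n) \<omega>)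
           (fZ' 0 *\<^sub>R (LINT z:{0..}|lborel. (z * K z) *\<^sub>R outer (r1 z) (r1 z)))
       \<and> conv_in_prob M (\<lambda>n \<omega>. Psi_plus Z K \<sigma>2 n (h n) \<omega>)
           ((fZ' 0 * \<sigma>2 0) *\<^sub>R (LINT z:{0..}|lborel. (z * (K z)\<^sup>2) *\<^sub>R outer (r1 z) (r1 z)))"
proof -
  interpret prob_space M by fact
  obtain BK where BK: "\<And>z. \<bar>K z\<bar> \<le> BK"
    using K_bdd unfolding bounded_real by auto
  obtain B\<sigma> where B\<sigma>: "\<And>z. \<bar>\<sigma>2 z\<bar> \<le> B\<sigma>"
    using \<sigma>2_bdd unfolding bounded_real by auto
  have fZ_deriv0: "(fZ has_real_derivative fZ' 0) (at 0 within {0..\<delta>})"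
    using fZ_deriv \<delta>_pos by simp
  have "conv_in_prob M (\<lambda>n x. boundary_moment_matrix Z K (\<lambda>_. 1) n (h n) x)
      ((fZ' 0 * 1) *\<^sub>R (LINT z:{0..}|lborel. (z * K z) *\<^sub>R outer (r1 z) (r1 z)))"
    by (rule conv_in_prob_boundary_moment_matrix[OF indep dens fZ_nonneg fZ0 fZ_deriv0 \<delta>_pos
          K_meas _ BK K_supp _ _ h_pos h_lim nh2]) auto
  moreover have "conv_in_prob M (\<lambda>n x. boundary_moment_matrix Z (\<lambda>u. (K u)\<^sup>2) \<sigma>2 n (h n) x)
      ((fZ' 0 * \<sigma>2 0) *\<^sub>R (LINT z:{0..}|lborel. (z * (K z)\<^sup>2) *\<^sub>R outer (r1 z) (r1 z)))"
  proof (rule conv_in_prob_boundary_moment_matrix[OF indep dens fZ_nonneg fZ0 fZ_deriv0 \<delta>_pos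
        _ \<sigma>2_meas _ _ B\<sigma> \<sigma>2_rcont h_pos h_lim nh2])
    show "\<bar>(K u)\<^sup>2\<bar> \<le> BK\<^sup>2" for u
      using power_mono[OF BK abs_ge_zero, where n=2] by simp
  qed (use K_meas K_supp in auto)
  ultimately show ?thesis
    by (simp add: Gamma_plus_eq_boundary_moment_matrix Psi_plus_eq_boundary_moment_matrix)
qed

end
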